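(* Consider the discrete all-pay auction in the model without ties, with values drawn i.i.d. from a distribution with full support on $X$. Let $\beta$ be a symmetric equilibrium bidding function, let $v\in X$ with $v+1\in X$, and let $b=\beta(v)$. Then $\beta(v+1)\le b+1$.
   Context: Model. There are $n\ge 2$ risk-neutral bidders competing for one indivisible object. Normalise the grid so that values and bids lie in $X=\{0,1,2,\dots,x\}$ for some $x\in\mathbb N$. Each bidder $i$ privately learns a value $v_i\in X$; values are drawn independently from a common distribution in which every element of $X$ has strictly positive probability. Each bidder submits a bid $b_i\in X$. A (pure) strategy is a bidding function $\beta:X\to X$. In the model without ties, bidder $i$ wins iff $b_i>b_j$ for all $j\neq i$ (if the highest bid is tied, nobody wins). In the all-pay auction, a bidder with value $v_i$ bidding $b_i$ gets expected payoff $v_i\Pr(i\text{ wins})-b_i$ (everyone pays their bid). An equilibrium is a profile of bidding functions such that each bidder's bidding function maximises their expected payoff given the others' bidding functions (a pure-strategy Bayes–Nash equilibrium) and such that no bidder uses a weakly dominated bidding function (a bidding function is weakly dominated if some other bidding function yields at least as high expected payoff against every profile of opponents' bidding functions, and strictly higher against some). A symmetric equilibrium (SE) is an equilibrium in which all bidders use the same bidding function $\beta$. *)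

theory Defs
  imports Complex_Main
begin

text \<open>Grid X = {0..x}.
  A bidding function is beta :: nat => nat with beta v in X for v in X
  (values outside X are irrelevant). There are n bidders; from the point of view
  of one bidder the m = n - 1 opponents use bidding functions gs j, j < m.\<close>

definition is_bid_fn :: "nat \<Rightarrow> (nat \<Rightarrow> nat) \<Rightarrow> bool" where
  "is_bid_fn x \<beta> \<longleftrightarrow> (\<forall>v\<le>x. \<beta> v \<le> x)"

definition is_opp_profile :: "nat \<Rightarrow> nat \<Rightarrow> (nat \<Rightarrow> nat \<Rightarrow> nat) \<Rightarrow> bool" where
  "is_opp_profile x m gs \<longleftrightarrow> (\<forall>j<m. is_bid_fn x (gs j))"

text \<open>Probability that a bid b strictly beats every opponent (model without ties;
  values independent).\<close>
definition win_prob :: "(nat \<Rightarrow> real) \<Rightarrow> nat \<Rightarrow> nat \<Rightarrow> (nat \<Rightarrow> nat \<Rightarrow> nat) \<Rightarrow> nat \<Rightarrow> real" where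
  "win_prob p x m gs b = (\<Prod>j<m. sum p {w \<in> {0..x}. gs j w < b})"

definition allpay_payoff :: "(nat \<Rightarrow> real) \<Rightarrow> nat \<Rightarrow> nat \<Rightarrow> (nat \<Rightarrow> nat) \<Rightarrow> (nat \<Rightarrow> nat \<Rightarrow> nat) \<Rightarrow> real" where
  "allpay_payoff p x m \<beta> gs =
     (\<Sum>v\<le>x. p v * (real v * win_prob p x m gs (\<beta> v) - real (\<beta> v)))"

definition weakly_dominated :: "(nat \<Rightarrow> real) \<Rightarrow> nat \<Rightarrow> nat \<Rightarrow> (nat \<Rightarrow> nat) \<Rightarrow> bool" where
  "weakly_dominated p x m \<beta> \<longleftrightarrow>
     (\<exists>\<beta>'. is_bid_fn x \<beta>' \<and>
        (\<forall>gs. is_opp_profile x m gs \<longrightarrow> allpay_payoff p x m \<beta>' gs \<ge> allpay_payoff p x m \<beta> gs) \<and>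
        (\<exists>gs. is_opp_profile x m gs \<and> allpay_payoff p x m \<beta>' gs > allpay_payoff p x m \<beta> gs))"

definition symmetric_eq :: "(nat \<Rightarrow> real) \<Rightarrow> nat \<Rightarrow> nat \<Rightarrow> (nat \<Rightarrow> nat) \<Rightarrow> bool" where
  "symmetric_eq p x n \<beta> \<longleftrightarrow>
     is_bid_fn x \<beta> \<and>
     (\<forall>\<beta>'. is_bid_fn x \<beta>' \<longrightarrow>
        allpay_payoff p x (n - 1) \<beta>' (\<lambda>_. \<beta>) \<le> allpay_payoff p x (n - 1) \<beta> (\<lambda>_. \<beta>)) \<and>
     \<not> weakly_dominated p x (n - 1) \<beta>"

end

theory Submission
  imports Defs
begin

text \<open>If \<open>\<beta>(v+1) \<ge> \<beta> v + 2\<close>, then since equilibrium bids are monotone in the value, nobody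
  ever bids \<open>\<beta>(v+1) - 1\<close>. Hence that bid wins exactly as often as \<open>\<beta>(v+1)\<close> but costs one
  unit less, so type \<open>v+1\<close> would profit from lowering its bid. Monotonicity itself is the
  usual single-crossing argument: the payoff \<open>v \<cdot> F b - b\<close> has increasing differences in
  \<open>(v, b)\<close> because the winning probability \<open>F\<close> is increasing in the bid.\<close>

definition interim_payoff ::
  "(nat \<Rightarrow> real) \<Rightarrow> nat \<Rightarrow> nat \<Rightarrow> (nat \<Rightarrow> nat \<Rightarrow> nat) \<Rightarrow> nat \<Rightarrow> nat \<Rightarrow> real" where
  "interim_payoff p x m gs v b = real v * win_prob p x m gs b - real b"

lemma allpay_payoff_fun_upd:
  assumes "w \<le> x"
  shows "allpay_payoff p x m (\<beta>(w := b)) gs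
       = allpay_payoff p x m \<beta> gs
         + p w * (interim_payoff p x m gs w b - interim_payoff p x m gs w (\<beta> w))"
proof -
  define f where "f g v = p v * interim_payoff p x m gs v (g v)" for g v
  have split: "allpay_payoff p x m g gs = f g w + (\<Sum>v\<in>{..x}-{w}. f g v)" for g
    unfolding allpay_payoff_def f_def interim_payoff_def using assms
    by (subst sum.remove[of _ w]) auto
  have "(\<Sum>v\<in>{..x}-{w}. f (\<beta>(w := b)) v) = (\<Sum>v\<in>{..x}-{w}. f \<beta> v)"
    by (rule sum.cong) (auto simp: f_def)
  then show ?thesis
    using split[of "\<beta>(w := b)"] split[of \<beta>] by (simp add: f_def algebra_simps)
qed

text \<open>The payoff is separable across values and every value has positive probability, so an
  ex-ante best response is a best response type by type.\<close>
lemma symmetric_eq_best_bid: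
  assumes eq: "symmetric_eq p x n \<beta>" and "p w > 0" and "w \<le> x" and "b \<le> x"
  shows "interim_payoff p x (n - 1) (\<lambda>_. \<beta>) w b \<le> interim_payoff p x (n - 1) (\<lambda>_. \<beta>) w (\<beta> w)"
proof -
  have "is_bid_fn x \<beta>"
    using eq by (simp add: symmetric_eq_def)
  then have "is_bid_fn x (\<beta>(w := b))"
    using \<open>b \<le> x\<close> by (auto simp: is_bid_fn_def)
  then have "allpay_payoff p x (n - 1) (\<beta>(w := b)) (\<lambda>_. \<beta>) \<le> allpay_payoff p x (n - 1) \<beta> (\<lambda>_. \<beta>)"
    using eq by (simp add: symmetric_eq_def)
  then show ?thesis
    using allpay_payoff_fun_upd[OF \<open>w \<le> x\<close>] \<open>p w > 0\<close> by (simp add: mult_le_0_iff)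
qed

lemma win_prob_mono:
  assumes "\<forall>w\<le>x. 0 \<le> p w"
  shows "mono (win_prob p x m gs)"
proof
  fix b b' :: nat
  assume "b \<le> b'"
  show "win_prob p x m gs b \<le> win_prob p x m gs b'"
    unfolding win_prob_def
    using assms \<open>b \<le> b'\<close> by (intro prod_mono conjI sum_nonneg sum_mono2) auto
qed

lemma win_prob_Suc_eq:
  assumes "\<forall>j<m. \<forall>w\<le>x. gs j w \<noteq> b"
  shows "win_prob p x m gs (Suc b) = win_prob p x m gs b"
proof -
  have "{w \<in> {0..x}. gs j w < Suc b} = {w \<in> {0..x}. gs j w < b}" if "j < m" for j
    using assms that by (auto simp: less_Suc_eq)
  then show ?thesis
    unfolding win_prob_def by (intro prod.cong) auto
qed

lemma single_crossing_bids_mono: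
  fixes F :: "nat \<Rightarrow> real"
  assumes "mono F" and "w < w'"
    and opt_w: "real w * F b' - real b' \<le> real w * F b - real b"
    and opt_w': "real w' * F b - real b \<le> real w' * F b' - real b'"
  shows "b \<le> b'"
proof (rule ccontr)
  assume "\<not> b \<le> b'"
  then have "F b' \<le> F b"
    using \<open>mono F\<close> by (simp add: mono_def)
  moreover have "(real w' - real w) * (F b - F b') \<le> 0"
    using opt_w opt_w' by (simp add: algebra_simps)
  ultimately have "F b = F b'"
    using \<open>w < w'\<close> by (simp add: mult_le_0_iff)
  then show False
    using opt_w \<open>\<not> b \<le> b'\<close> by simp
qed

lemma symmetric_eq_mono:
  assumes eq: "symmetric_eq p x n \<beta>" and pos: "\<forall>w\<le>x. p w > 0"
    and "w \<le> w'" and "w' \<le> x"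
  shows "\<beta> w \<le> \<beta> w'"
proof (cases "w = w'")
  case False
  have "is_bid_fn x \<beta>"
    using eq by (simp add: symmetric_eq_def)
  then have bids: "\<beta> w \<le> x" "\<beta> w' \<le> x"
    using assms(3,4) by (auto simp: is_bid_fn_def)
  have "mono (win_prob p x (n - 1) (\<lambda>_. \<beta>))"
    using pos by (intro win_prob_mono) (auto simp: less_imp_le)
  then show ?thesis
    using symmetric_eq_best_bid[OF eq _ _ bids(2), of w]
      symmetric_eq_best_bid[OF eq _ _ bids(1), of w'] pos assms(3,4) False
    by (intro single_crossing_bids_mono[where w = w and w' = w'])
       (auto simp: interim_payoff_def)
qed simp

lemma symmetric_eq_no_bid_between:
  assumes eq: "symmetric_eq p x n \<beta>" and pos: "\<forall>w\<le>x. p w > 0" and "v + 1 \<le> x"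
    and "\<beta> v < b" and "b < \<beta> (v + 1)"
  shows "\<forall>w\<le>x. \<beta> w \<noteq> b"
proof (intro allI impI)
  fix w
  assume "w \<le> x"
  show "\<beta> w \<noteq> b"
  proof (cases "w \<le> v")
    case True
    then show ?thesis
      using symmetric_eq_mono[OF eq pos True] assms(3,4) by simp
  next
    case False
    then show ?thesis
      using symmetric_eq_mono[OF eq pos, of "v + 1" w] assms(5) \<open>w \<le> x\<close> by simp
  qed
qed

theorem lemma10:
  fixes p :: "nat \<Rightarrow> real" and x n v :: nat and \<beta> :: "nat \<Rightarrow> nat"
  assumes "n \<ge> 2"
    and "\<forall>w\<le>x. p w > 0"
    and "(\<Sum>w\<le>x. p w) = 1"
    and "symmetric_eq p x n \<beta>"
    and "v + 1 \<le> x"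
  shows "\<beta> (v + 1) \<le> \<beta> v + 1"
proof (rule ccontr)
  assume "\<not> ?thesis"
  then obtain b where b: "\<beta> (v + 1) = Suc b" "\<beta> v < b"
    by (intro that[of "\<beta> (v + 1) - 1"]) auto
  have "\<forall>w\<le>x. \<beta> w \<noteq> b"
    using symmetric_eq_no_bid_between[OF assms(4,2,5) b(2)] b(1) by simp
  then have same_odds: "win_prob p x (n - 1) (\<lambda>_. \<beta>) (Suc b) = win_prob p x (n - 1) (\<lambda>_. \<beta>) b"
    by (intro win_prob_Suc_eq) simp
  have "b \<le> x"
    using assms(4,5) b(1) by (auto simp: symmetric_eq_def is_bid_fn_def)
  then have "interim_payoff p x (n - 1) (\<lambda>_. \<beta>) (v + 1) b
           \<le> interim_payoff p x (n - 1) (\<lambda>_. \<beta>) (v + 1) (Suc b)"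
    using symmetric_eq_best_bid[OF assms(4) _ assms(5), of b] assms(2,5) b(1) by simp
  then show False
    using same_odds by (simp add: interim_payoff_def)
qed

end
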